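(* Let $\mathbb{X}\subseteq\mathbb{R}^{n_x}$, $\mathbb{U}\subseteq\mathbb{R}^{n_u}$ with $\mu_L(\mathbb{U})>0$, $T>0$ an integer, $x_0$ drawn from an initial distribution, $x_{t+1}\sim p(\cdot\mid x_t,u_t)$ a transition kernel, $u_t\sim\pi_t(\cdot\mid x_t)$, and cost functions $c_t:\mathbb{X}\times\mathbb{U}\to\mathbb{R}$, $c_T:\mathbb{X}\to\mathbb{R}$. Let $\eta\in\mathbb{R}\setminus\{0,1\}$, and consider the problem $$\underset{\{\pi_t\}_{t=0}^{T-1}}{\mathrm{minimize}}\ \frac{1}{\eta}\log\mathbb{E}\Big[\exp\Big(\eta c_T(x_T)+\eta\sum_{t=0}^{T-1}\big(c_t(x_t,u_t)-\mathcal{H}_{1-\eta}(\pi_t(\cdot\mid x_t))\big)\Big)\Big]\qquad(\ast\ast)$$ over policies with $\pi_t(\cdot\mid x)\in L^{1-\eta}(\mathbb{U})$ for all $x$. Define $\mathscr{V}_T(x)=c_T(x)$ and for $t\in\{0,\dots,T-1\}$ $$\mathscr{V}_t(x)=\inf_{\{\pi_s\}_{s=t}^{T-1}}\frac{1}{\eta}\log\mathbb{E}\Big[\exp\Big(\eta c_T(x_T)+\eta\sum_{s=t}^{T-1}\big(c_s(x_s,u_s)-\mathcal{H}_{1-\eta}(\pi_s(\cdot\mid x_s))\big)\Big)\,\Big|\,x_t=x\Big],$$ $$\mathscr{Q}_t(x,u)=c_t(x,u)+\frac{1}{\eta}\log\mathbb{E}_{p(x_{t+1}\mid x,u)}\big[\exp(\eta\mathscr{V}_{t+1}(x_{t+1}))\big].$$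 Assume that $c_t$ is bounded below for every $t\in\{0,\dots,T\}$, and that for every $x\in\mathbb{X}$ and $t\in\{0,\dots,T-1\}$, $\int_{\mathbb{U}}\exp(-\mathscr{Q}_t(x,u'))\,du'<\infty$ and $\int_{\mathbb{U}}\exp(-(1-\eta)\mathscr{Q}_t(x,u'))\,du'<\infty$. Then the unique optimal policy of $(\ast\ast)$ is $$\pi_t^\star(u_t\mid x_t)=\frac{\exp(-\mathscr{Q}_t(x_t,u_t))}{\mathscr{Z}_t(x_t)},\qquad \mathscr{Z}_t(x_t)=\int_{\mathbb{U}}\exp(-\mathscr{Q}_t(x_t,u'))\,du',$$ for all $t\in\{0,\dots,T-1\}$, $x_t\in\mathbb{X}$, $u_t\in\mathbb{U}$, and $$\mathscr{V}_t(x_t)=\frac{-1}{1-\eta}\log\int_{\mathbb{U}}\exp\big(-(1-\eta)\mathscr{Q}_t(x_t,u')\big)\,du'\quad\text{for all }t\in\{0,\dots,T-1\},\ x_t\in\mathbb{X}.$$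
   Context: For a probability density $p$ on $\mathbb{U}$ and $\alpha\in\mathbb{R}\setminus\{0,1\}$ (including $\alpha<0$), the R\'enyi entropy is $\mathcal{H}_\alpha(p)=\frac{1}{\alpha(1-\alpha)}\log\int_{\{u:p(u)>0\}}p(u)^\alpha\,du$. $L^{\alpha}(\mathbb{U})=\{\rho$ probability density on $\mathbb{U}:\int_{\mathbb{U}}\rho(u)^{\alpha}du<\infty\}$. $\mu_L$ is Lebesgue measure. *)

theory Defs
  imports "HOL-Probability.Probability"
begin

definition ln_enn :: "ennreal \<Rightarrow> ereal" where
  "ln_enn w = (if w = 0 then -\<infinity> else if w = \<top> then \<infinity> else ereal (ln (enn2real w)))"

definition exp_e :: "ereal \<Rightarrow> ennreal" where
  "exp_e z = (if z = \<infinity> then \<top> else if z = -\<infinity> then 0 else ennreal (exp (real_of_ereal z)))"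

text \<open>rho(u)^alpha for rho(u) >= 0 with the convention 0^alpha = +infinity for alpha < 0.\<close>
definition pow_enn :: "real \<Rightarrow> real \<Rightarrow> ennreal" where
  "pow_enn r \<alpha> = (if r > 0 then ennreal (r powr \<alpha>) else if \<alpha> > 0 then 0 else \<top>)"

definition prob_density_on :: "'b::euclidean_space set \<Rightarrow> ('b \<Rightarrow> real) \<Rightarrow> bool" where
  "prob_density_on U \<rho> \<longleftrightarrow> \<rho> \<in> borel_measurable (restrict_space borel U) \<and> (\<forall>u\<in>U. 0 \<le> \<rho> u)
     \<and> (\<integral>\<^sup>+u\<in>U. ennreal (\<rho> u) \<partial>lborel) = 1"

definition Lpow :: "real \<Rightarrow> 'b::euclidean_space set \<Rightarrow> ('b \<Rightarrow> real) set" where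
  "Lpow \<alpha> U = {\<rho>. prob_density_on U \<rho> \<and> (\<integral>\<^sup>+u\<in>U. pow_enn (\<rho> u) \<alpha> \<partial>lborel) < \<top>}"

definition renyi :: "real \<Rightarrow> 'b::euclidean_space set \<Rightarrow> ('b \<Rightarrow> real) \<Rightarrow> real" where
  "renyi \<alpha> U p = ln (enn2real (\<integral>\<^sup>+u\<in>{u\<in>U. p u > 0}. ennreal (p u powr \<alpha>) \<partial>lborel)) / (\<alpha> * (1 - \<alpha>))"

text \<open>A (Markov) policy: pi s x is the density of u_s given x_s = x; admissible from time t
  means jointly measurable and in L^(1-eta)(U) for every x in X, at every time s in [t, T).\<close>
definition admissible_policy ::
  "real \<Rightarrow> nat \<Rightarrow> 'a::euclidean_space set \<Rightarrow> 'b::euclidean_space set \<Rightarrow> nat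
     \<Rightarrow> (nat \<Rightarrow> 'a \<Rightarrow> 'b \<Rightarrow> real) \<Rightarrow> bool" where
  "admissible_policy \<eta> T X U t \<pi> \<longleftrightarrow>
     (\<forall>s. t \<le> s \<and> s < T \<longrightarrow>
        (\<lambda>(x, u). \<pi> s x u) \<in> borel_measurable (restrict_space borel (X \<times> U))
        \<and> (\<forall>x\<in>X. \<pi> s x \<in> Lpow (1 - \<eta>) U))"

text \<open>risk_obj ... k t x = E[exp(eta c_T(x_T) + eta sum_{s=t}^{T-1} (c_s(x_s,u_s) - H(pi_s(.|x_s)))) | x_t = x]
  where k = T - t is the number of remaining steps (Markov recursion of the conditional expectation).\<close>
fun risk_obj ::
  "real \<Rightarrow> 'b::euclidean_space set \<Rightarrow> ('a \<Rightarrow> 'b \<Rightarrow> 'a measure) \<Rightarrow> (nat \<Rightarrow> 'a \<Rightarrow> 'b \<Rightarrow> real)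
     \<Rightarrow> ('a \<Rightarrow> real) \<Rightarrow> (nat \<Rightarrow> 'a \<Rightarrow> 'b \<Rightarrow> real) \<Rightarrow> nat \<Rightarrow> nat \<Rightarrow> 'a \<Rightarrow> ennreal" where
  "risk_obj \<eta> U K c cT \<pi> 0 t x = ennreal (exp (\<eta> * cT x))"
| "risk_obj \<eta> U K c cT \<pi> (Suc k) t x =
     (\<integral>\<^sup>+u\<in>U. ennreal (\<pi> t x u * exp (\<eta> * (c t x u - renyi (1 - \<eta>) U (\<pi> t x))))
              * (\<integral>\<^sup>+y. risk_obj \<eta> U K c cT \<pi> k (Suc t) y \<partial>(K x u)) \<partial>lborel)"

definition cost_to_go ::
  "real \<Rightarrow> nat \<Rightarrow> 'b::euclidean_space set \<Rightarrow> ('a \<Rightarrow> 'b \<Rightarrow> 'a measure) \<Rightarrow> (nat \<Rightarrow> 'a \<Rightarrow> 'b \<Rightarrow> real)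
     \<Rightarrow> ('a \<Rightarrow> real) \<Rightarrow> (nat \<Rightarrow> 'a \<Rightarrow> 'b \<Rightarrow> real) \<Rightarrow> nat \<Rightarrow> 'a \<Rightarrow> ereal" where
  "cost_to_go \<eta> T U K c cT \<pi> t x = ereal (1 / \<eta>) * ln_enn (risk_obj \<eta> U K c cT \<pi> (T - t) t x)"

definition total_obj ::
  "real \<Rightarrow> nat \<Rightarrow> 'b::euclidean_space set \<Rightarrow> ('a \<Rightarrow> 'b \<Rightarrow> 'a measure) \<Rightarrow> (nat \<Rightarrow> 'a \<Rightarrow> 'b \<Rightarrow> real)
     \<Rightarrow> ('a \<Rightarrow> real) \<Rightarrow> 'a measure \<Rightarrow> (nat \<Rightarrow> 'a \<Rightarrow> 'b \<Rightarrow> real) \<Rightarrow> ereal" where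
  "total_obj \<eta> T U K c cT \<mu>0 \<pi> =
     ereal (1 / \<eta>) * ln_enn (\<integral>\<^sup>+x. risk_obj \<eta> U K c cT \<pi> T 0 x \<partial>\<mu>0)"

definition value_fn ::
  "real \<Rightarrow> nat \<Rightarrow> 'a::euclidean_space set \<Rightarrow> 'b::euclidean_space set \<Rightarrow> ('a \<Rightarrow> 'b \<Rightarrow> 'a measure)
     \<Rightarrow> (nat \<Rightarrow> 'a \<Rightarrow> 'b \<Rightarrow> real) \<Rightarrow> ('a \<Rightarrow> real) \<Rightarrow> nat \<Rightarrow> 'a \<Rightarrow> ereal" where
  "value_fn \<eta> T X U K c cT t x =
     (if t = T then ereal (cT x)
      else (INF \<pi> \<in> {\<pi>. admissible_policy \<eta> T X U t \<pi>}. cost_to_go \<eta> T U K c cT \<pi> t x))"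

definition Q_fn ::
  "real \<Rightarrow> nat \<Rightarrow> 'a::euclidean_space set \<Rightarrow> 'b::euclidean_space set \<Rightarrow> ('a \<Rightarrow> 'b \<Rightarrow> 'a measure)
     \<Rightarrow> (nat \<Rightarrow> 'a \<Rightarrow> 'b \<Rightarrow> real) \<Rightarrow> ('a \<Rightarrow> real) \<Rightarrow> nat \<Rightarrow> 'a \<Rightarrow> 'b \<Rightarrow> ereal" where
  "Q_fn \<eta> T X U K c cT t x u =
     ereal (c t x u) + ereal (1 / \<eta>) *
       ln_enn (\<integral>\<^sup>+y. exp_e (ereal \<eta> * value_fn \<eta> T X U K c cT (Suc t) y) \<partial>(K x u))"

definition Z_fn ::
  "real \<Rightarrow> nat \<Rightarrow> 'a::euclidean_space set \<Rightarrow> 'b::euclidean_space set \<Rightarrow> ('a \<Rightarrow> 'b \<Rightarrow> 'a measure)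
     \<Rightarrow> (nat \<Rightarrow> 'a \<Rightarrow> 'b \<Rightarrow> real) \<Rightarrow> ('a \<Rightarrow> real) \<Rightarrow> nat \<Rightarrow> 'a \<Rightarrow> ennreal" where
  "Z_fn \<eta> T X U K c cT t x = (\<integral>\<^sup>+u\<in>U. exp_e (- Q_fn \<eta> T X U K c cT t x u) \<partial>lborel)"

definition opt_policy ::
  "real \<Rightarrow> nat \<Rightarrow> 'a::euclidean_space set \<Rightarrow> 'b::euclidean_space set \<Rightarrow> ('a \<Rightarrow> 'b \<Rightarrow> 'a measure)
     \<Rightarrow> (nat \<Rightarrow> 'a \<Rightarrow> 'b \<Rightarrow> real) \<Rightarrow> ('a \<Rightarrow> real) \<Rightarrow> nat \<Rightarrow> 'a \<Rightarrow> 'b \<Rightarrow> real" where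
  "opt_policy \<eta> T X U K c cT t x u =
     exp (- real_of_ereal (Q_fn \<eta> T X U K c cT t x u)) / enn2real (Z_fn \<eta> T X U K c cT t x)"

end

theory Submission
  imports Defs
begin

text \<open>
  The proof is a backward induction over t. Its one-step core is a variational formula for the
  Renyi entropy H of order \<open>1 - \<eta>\<close>: for a probability density \<rho> on U and a real function q,
  \<open>\<integral> \<rho> exp (\<eta> (q - H(\<rho>)))\<close> is at least (for \<eta> > 0), resp. at most (for \<eta> < 0),
  \<open>(\<integral> exp (-(1 - \<eta>) q))\<^bsup>\<eta>/(\<eta>-1)\<^esup>\<close>, with equality exactly for the Gibbs density
  \<open>exp (-q) / \<integral> exp (-q)\<close>. With \<open>\<alpha> = 1 - \<eta>\<close>, \<open>s = \<rho> exp q\<close> and the weight \<open>w = exp (-\<alpha> q)\<close>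
  this is Holder's inequality, reversed for \<alpha> < 1, between \<open>\<integral> s w\<close> and
  \<open>(\<integral> s\<^sup>\<alpha> w)\<^bsup>1/\<alpha>\<^esup> (\<integral> w)\<^bsup>1-1/\<alpha>\<^esup>\<close>. It follows by integrating against w the tangent
  inequality of the convex or concave function \<open>x\<^sup>\<alpha>\<close> at the point l with
  \<open>l\<^sup>\<alpha> \<integral> w = \<integral> s\<^sup>\<alpha> w\<close>; strictness of the tangent inequality gives the equality case.
  At time t the formula is applied with \<open>q = Q\<^sub>t(x, \<cdot>)\<close>: by induction, the exponentiated cost
  of the remaining steps is bounded by \<open>exp (\<eta> V\<^sub>t\<^sub>+\<^sub>1)\<close> on the correct side for every admissible
  policy, with equality for the Gibbs policy.
\<close>

section \<open>The tangent inequality for real powers\<close>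

lemma powr_minus_one_sign:
  fixes z \<beta> :: real
  assumes "z > 0" "z \<noteq> 1" "\<beta> \<noteq> 0"
  shows "\<beta> * (z powr \<beta> - 1) * (z - 1) > 0"
proof -
  have "sgn (z powr \<beta> - 1) = sgn (\<beta> * ln z)"
    using assms(1) by (simp add: powr_def sgn_if)
  moreover have "sgn (z - 1) = sgn (ln z)"
    using assms(1) by (simp add: sgn_if)
  ultimately have "sgn (\<beta> * (z powr \<beta> - 1) * (z - 1)) = sgn \<beta> * sgn \<beta> * (sgn (ln z) * sgn (ln z))"
    by (simp add: sgn_mult)
  also have "\<dots> = 1" using assms by (simp add: sgn_if)
  finally show ?thesis by (simp add: sgn_1_pos)
qed

lemma powr_tangent_strict:
  fixes x \<alpha> :: real
  assumes "\<alpha> \<noteq> 0" "\<alpha> \<noteq> 1" "x > 0 \<or> (x = 0 \<and> \<alpha> > 0)" "x \<noteq> 1"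
  shows "\<alpha> * (\<alpha> - 1) * (x powr \<alpha> - 1 - \<alpha> * (x - 1)) > 0"
proof -
  define k where "k x = \<alpha> * (\<alpha> - 1) * (x powr \<alpha> - 1 - \<alpha> * (x - 1))" for x :: real
  define k' where "k' x = \<alpha>\<^sup>2 * ((\<alpha> - 1) * (x powr (\<alpha> - 1) - 1))" for x :: real
  have deriv: "DERIV k z :> k' z" if "z > 0" for z
    unfolding k_def k'_def using that
    by (auto intro!: derivative_eq_intros simp: power2_eq_square algebra_simps)
  have deriv_sign: "k' z * (z - 1) > 0" if "z > 0" "z \<noteq> 1" for z
    using powr_minus_one_sign[OF that, of "\<alpha> - 1"] assms(1,2) by (simp add: k'_def mult.assoc)
  have cont: "continuous_on {a..b} k" if "a > 0" for a b
    unfolding k_def using that by (auto intro!: continuous_intros)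
  consider "x = 0" | "0 < x" "x < 1" | "x > 1"
    using assms(3,4) by linarith
  then have "k x > k 1"
  proof cases
    case 1
    then show ?thesis using assms by (simp add: k_def mult.assoc flip: power2_eq_square)
  next
    case 2
    show ?thesis
    proof (rule DERIV_neg_imp_decreasing_open[OF \<open>x < 1\<close> _ cont[OF \<open>x > 0\<close>]])
      fix z assume "x < z" "z < 1"
      with 2 have "DERIV k z :> k' z" "k' z < 0"
        using deriv deriv_sign[of z] by (auto simp: zero_less_mult_iff)
      then show "\<exists>y. DERIV k z :> y \<and> y < 0" by blast
    qed
  next
    case 3
    show ?thesis
    proof (rule DERIV_pos_imp_increasing_open[OF \<open>x > 1\<close> _ cont])
      fix z assume "1 < z" "z < x"
      then have "DERIV k z :> k' z" "k' z > 0"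
        using deriv deriv_sign[of z] by (auto simp: zero_less_mult_iff)
      then show "\<exists>y. DERIV k z :> y \<and> y > 0" by blast
    qed simp
  qed
  then show ?thesis by (simp add: k_def)
qed

lemma powr_tangent_ineq:
  fixes s l \<alpha> :: real
  assumes "\<alpha> \<noteq> 0" "\<alpha> \<noteq> 1" "l > 0" "s > 0 \<or> (s = 0 \<and> \<alpha> > 0)"
  shows "\<alpha> * (\<alpha> - 1) * (s powr \<alpha> - l powr \<alpha> - \<alpha> * l powr (\<alpha> - 1) * (s - l)) \<ge> 0"
    and "s \<noteq> l \<Longrightarrow> \<alpha> * (\<alpha> - 1) * (s powr \<alpha> - l powr \<alpha> - \<alpha> * l powr (\<alpha> - 1) * (s - l)) > 0"
proof -
  define x where "x = s / l"
  have x: "x > 0 \<or> (x = 0 \<and> \<alpha> > 0)" and s: "s = l * x"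
    using assms(3,4) by (auto simp: x_def)
  have scale: "\<alpha> * (\<alpha> - 1) * (s powr \<alpha> - l powr \<alpha> - \<alpha> * l powr (\<alpha> - 1) * (s - l))
      = l powr \<alpha> * (\<alpha> * (\<alpha> - 1) * (x powr \<alpha> - 1 - \<alpha> * (x - 1)))"
    using assms(3) x unfolding s by (auto simp: powr_mult powr_diff field_simps)
  show strict: "s \<noteq> l \<Longrightarrow> \<alpha> * (\<alpha> - 1) * (s powr \<alpha> - l powr \<alpha> - \<alpha> * l powr (\<alpha> - 1) * (s - l)) > 0"
    unfolding scale using powr_tangent_strict[OF assms(1,2) x] assms(3) s by auto
  show "\<alpha> * (\<alpha> - 1) * (s powr \<alpha> - l powr \<alpha> - \<alpha> * l powr (\<alpha> - 1) * (s - l)) \<ge> 0"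
    using strict by (cases "s = l") auto
qed

context
  fixes M :: "'a measure" and s w :: "'a \<Rightarrow> real" and \<alpha> l :: real
  assumes \<alpha>: "\<alpha> \<noteq> 0" "\<alpha> \<noteq> 1" and l: "l > 0"
    and [measurable]: "s \<in> borel_measurable M" "w \<in> borel_measurable M"
    and w_pos: "\<And>x. x \<in> space M \<Longrightarrow> w x > 0"
    and s_dom: "AE x in M. s x > 0 \<or> (s x = 0 \<and> \<alpha> > 0)"
    and int_sw: "integrable M (\<lambda>x. s x powr \<alpha> * w x)" and int_w: "integrable M w"
    and norm: "(\<integral>x. s x powr \<alpha> * w x \<partial>M) = l powr \<alpha> * (\<integral>x. w x \<partial>M)"
begin

private definition "g x = \<alpha> * (\<alpha> - 1) * (s x powr \<alpha> - l powr \<alpha> - \<alpha> * l powr (\<alpha> - 1) * (s x - l))"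

private lemma AE_g_nonneg: "AE x in M. g x \<ge> 0"
  using s_dom by eventually_elim (use powr_tangent_ineq(1)[OF \<alpha> l] in \<open>simp add: g_def\<close>)

private lemma AE_g_pos: "AE x in M. s x \<noteq> l \<longrightarrow> g x > 0"
  using s_dom by eventually_elim (use powr_tangent_ineq(2)[OF \<alpha> l] in \<open>simp add: g_def\<close>)

private lemma AE_sw_nonneg: "AE x in M. s x * w x \<ge> 0"
  using s_dom AE_space by eventually_elim (auto intro!: mult_nonneg_nonneg less_imp_le[OF w_pos])

private lemma l_powr: "l powr \<alpha> = l powr (\<alpha> - 1) * l"
  using l by (simp add: powr_diff)

lemma integral_powr_tangent:
  assumes int_s: "integrable M (\<lambda>x. s x * w x)"
  shows "(\<alpha> - 1) * ((\<integral>x. s x * w x \<partial>M) - l * (\<integral>x. w x \<partial>M)) \<le> 0"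
    and "(\<integral>x. s x * w x \<partial>M) = l * (\<integral>x. w x \<partial>M) \<Longrightarrow> AE x in M. s x = l"
proof -
  define k where "k = \<alpha>\<^sup>2 * l powr (\<alpha> - 1)"
  have k: "k > 0"
    using \<alpha> l by (simp add: k_def)
  have gw: "g x * w x = \<alpha> * (\<alpha> - 1) * (s x powr \<alpha> * w x) + \<alpha> * (\<alpha> - 1)\<^sup>2 * l powr \<alpha> * w x
      - (\<alpha> - 1) * k * (s x * w x)" for x
    unfolding g_def k_def l_powr by (simp add: power2_eq_square algebra_simps)
  have int_gw: "integrable M (\<lambda>x. g x * w x)"
    unfolding gw using int_s int_sw int_w by simp
  have "(\<integral>x. g x * w x \<partial>M) = \<alpha> * (\<alpha> - 1) * (\<integral>x. s x powr \<alpha> * w x \<partial>M)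
      + \<alpha> * (\<alpha> - 1)\<^sup>2 * l powr \<alpha> * (\<integral>x. w x \<partial>M) - (\<alpha> - 1) * k * (\<integral>x. s x * w x \<partial>M)"
    unfolding gw using int_s int_sw int_w by simp
  also have "\<dots> = - k * ((\<alpha> - 1) * ((\<integral>x. s x * w x \<partial>M) - l * (\<integral>x. w x \<partial>M)))"
    unfolding norm k_def l_powr by (simp add: power2_eq_square algebra_simps)
  finally have integral_gw:
    "(\<integral>x. g x * w x \<partial>M) = - k * ((\<alpha> - 1) * ((\<integral>x. s x * w x \<partial>M) - l * (\<integral>x. w x \<partial>M)))" .
  have gw_nonneg: "AE x in M. g x * w x \<ge> 0"
    using AE_g_nonneg AE_space by eventually_elim (auto intro!: mult_nonneg_nonneg less_imp_le[OF w_pos])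
  show "(\<alpha> - 1) * ((\<integral>x. s x * w x \<partial>M) - l * (\<integral>x. w x \<partial>M)) \<le> 0"
    using integral_nonneg_AE[OF gw_nonneg] k unfolding integral_gw by (simp add: mult_le_0_iff)
  assume "(\<integral>x. s x * w x \<partial>M) = l * (\<integral>x. w x \<partial>M)"
  then have "AE x in M. g x * w x = 0"
    using integral_nonneg_eq_0_iff_AE[OF int_gw gw_nonneg] unfolding integral_gw by simp
  then show "AE x in M. s x = l"
    using AE_g_pos AE_space by eventually_elim (auto dest: w_pos)
qed

lemma integrable_powr_tangent:
  assumes "\<alpha> > 1"
  shows "integrable M (\<lambda>x. s x * w x)"
proof (rule Bochner_Integration.integrable_bound)
  show "integrable M (\<lambda>x. (s x powr \<alpha> * w x + (\<alpha> - 1) * l powr \<alpha> * w x) / (\<alpha> * l powr (\<alpha> - 1)))"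
    using int_sw int_w by simp
  show "AE x in M. norm (s x * w x)
      \<le> norm ((s x powr \<alpha> * w x + (\<alpha> - 1) * l powr \<alpha> * w x) / (\<alpha> * l powr (\<alpha> - 1)))"
    using AE_g_nonneg AE_sw_nonneg AE_space
  proof eventually_elim
    case (elim x)
    have "\<alpha> * (\<alpha> - 1) > 0"
      using assms by simp
    then have "s x powr \<alpha> - l powr \<alpha> - \<alpha> * l powr (\<alpha> - 1) * (s x - l) \<ge> 0"
      using elim(1) unfolding g_def by (metis linorder_not_le mult_less_0_iff not_square_less_zero)
    then have "\<alpha> * l powr (\<alpha> - 1) * s x \<le> s x powr \<alpha> + (\<alpha> - 1) * l powr \<alpha>"
      unfolding l_powr by (simp add: algebra_simps)
    then have "\<alpha> * l powr (\<alpha> - 1) * (s x * w x) \<le> s x powr \<alpha> * w x + (\<alpha> - 1) * l powr \<alpha> * w x"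
      using w_pos[OF elim(3)] by (simp add: mult_right_mono flip: mult.assoc distrib_right)
    then show ?case
      using elim(2) w_pos[OF elim(3)] assms l by (simp add: field_simps)
  qed
qed simp

lemma nn_integral_powr_tangent:
  defines "A \<equiv> \<integral>\<^sup>+x. ennreal (s x * w x) \<partial>M"
  shows "\<alpha> < 1 \<Longrightarrow> ennreal (l * (\<integral>x. w x \<partial>M)) \<le> A"
    and "\<alpha> > 1 \<Longrightarrow> A \<le> ennreal (l * (\<integral>x. w x \<partial>M))"
    and "A = ennreal (l * (\<integral>x. w x \<partial>M)) \<Longrightarrow> AE x in M. s x = l"
proof -
  have A_integral: "A = ennreal (\<integral>x. s x * w x \<partial>M)" if "integrable M (\<lambda>x. s x * w x)"
    unfolding A_def using that AE_sw_nonneg by (rule nn_integral_eq_integral)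
  have integrable_if_finite: "integrable M (\<lambda>x. s x * w x)" if "A < \<top>"
    using AE_sw_nonneg that unfolding A_def by (intro integrableI_nonneg) auto
  show "\<alpha> < 1 \<Longrightarrow> ennreal (l * (\<integral>x. w x \<partial>M)) \<le> A"
  proof (cases "A < \<top>")
    case True
    assume "\<alpha> < 1"
    then show ?thesis
      using integral_powr_tangent(1)[OF integrable_if_finite[OF True]] A_integral[OF integrable_if_finite[OF True]]
      by (simp add: mult_le_0_iff ennreal_leI)
  qed (simp add: not_less top_unique)
  show "\<alpha> > 1 \<Longrightarrow> A \<le> ennreal (l * (\<integral>x. w x \<partial>M))"
    using integral_powr_tangent(1)[OF integrable_powr_tangent] A_integral[OF integrable_powr_tangent]
    by (simp add: mult_le_0_iff ennreal_leI)
  assume eq: "A = ennreal (l * (\<integral>x. w x \<partial>M))"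
  then have int: "integrable M (\<lambda>x. s x * w x)"
    by (intro integrable_if_finite) simp
  have "(\<integral>x. w x \<partial>M) \<ge> 0"
    by (intro integral_nonneg_AE AE_I2 less_imp_le w_pos)
  then have "(\<integral>x. s x * w x \<partial>M) = l * (\<integral>x. w x \<partial>M)"
    using A_integral[OF int] eq l integral_nonneg_AE[OF AE_sw_nonneg] by simp
  then show "AE x in M. s x = l"
    by (rule integral_powr_tangent(2)[OF int])
qed

end

section \<open>Holder's inequality and a variational formula for Renyi entropy\<close>

lemma nn_integral_pos_on_support:
  fixes \<rho> :: "'a \<Rightarrow> real" and f :: "'a \<Rightarrow> ennreal"
  assumes f: "f \<in> borel_measurable M" and \<rho>: "(\<integral>\<^sup>+x. ennreal (\<rho> x) \<partial>M) \<noteq> 0"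
    and pos: "\<And>x. x \<in> space M \<Longrightarrow> \<rho> x > 0 \<Longrightarrow> f x > 0"
  shows "(\<integral>\<^sup>+x. f x \<partial>M) > 0"
proof (rule ccontr)
  assume "\<not> ?thesis"
  then have "AE x in M. f x = 0"
    using nn_integral_0_iff_AE[OF f] by (simp add: not_less)
  then have "AE x in M. ennreal (\<rho> x) = 0"
    using AE_space by eventually_elim (use pos in \<open>force simp: ennreal_eq_0_iff\<close>)
  then have "(\<integral>\<^sup>+x. ennreal (\<rho> x) \<partial>M) = 0"
    by (simp add: nn_integral_cong_AE)
  with \<rho> show False ..
qed

lemma set_nn_integral_restrict_space:
  "U \<in> sets borel \<Longrightarrow> (\<integral>\<^sup>+u\<in>U. f u \<partial>lborel) = (\<integral>\<^sup>+u. f u \<partial>restrict_space lborel U)"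
  by (simp add: nn_integral_restrict_space)

lemma measurable_restrict_space_lborel_iff:
  "f \<in> restrict_space lborel U \<rightarrow>\<^sub>M N \<longleftrightarrow> f \<in> restrict_space borel U \<rightarrow>\<^sub>M N"
proof -
  have "sets (restrict_space lborel U) = sets (restrict_space borel U)"
    by (rule sets_restrict_space_cong) simp
  then show ?thesis
    using measurable_cong_sets by blast
qed

definition gibbs_density :: "'b::euclidean_space set \<Rightarrow> ('b \<Rightarrow> real) \<Rightarrow> 'b \<Rightarrow> real" where
  "gibbs_density U q u = exp (- q u) / enn2real (\<integral>\<^sup>+u'\<in>U. ennreal (exp (- q u')) \<partial>lborel)"

lemma set_nn_integral_exp_pos:
  assumes "U \<in> sets borel" "emeasure lborel U > 0" "f \<in> borel_measurable (restrict_space borel U)"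
  shows "0 < (\<integral>\<^sup>+u\<in>U. ennreal (exp (f u)) \<partial>lborel)"
proof -
  have "(\<integral>\<^sup>+u. ennreal 1 \<partial>restrict_space lborel U) \<noteq> 0"
    using assms by (simp add: emeasure_restrict_space)
  then show ?thesis
    unfolding set_nn_integral_restrict_space[OF assms(1)] using assms(3)
    by (intro nn_integral_pos_on_support[where \<rho>="\<lambda>_. 1"]) (auto simp: measurable_restrict_space_lborel_iff)
qed

context
  fixes U :: "'b::euclidean_space set" and \<rho> q :: "'b \<Rightarrow> real" and \<alpha> :: real
  assumes U: "U \<in> sets borel" and \<alpha>: "\<alpha> \<noteq> 0" "\<alpha> \<noteq> 1"
    and \<rho>: "\<rho> \<in> Lpow \<alpha> U" and q: "q \<in> borel_measurable (restrict_space borel U)"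
    and C_fin: "(\<integral>\<^sup>+u\<in>U. ennreal (exp (- (\<alpha> * q u))) \<partial>lborel) < \<top>"
begin

private abbreviation "M \<equiv> restrict_space lborel U"

private lemma space_M: "space M = U"
  by (simp add: space_restrict_space)

private lemma AE_M_iff: "(AE u in M. P u) \<longleftrightarrow> (AE u in lborel. u \<in> U \<longrightarrow> P u)"
  using U by (simp add: AE_restrict_space_iff)

private lemma Lpow_M:
  shows \<rho>_measurable: "\<rho> \<in> borel_measurable M"
    and q_measurable: "q \<in> borel_measurable M"
    and \<rho>_nonneg: "\<And>u. u \<in> U \<Longrightarrow> \<rho> u \<ge> 0"
    and \<rho>_integral: "(\<integral>\<^sup>+u. ennreal (\<rho> u) \<partial>M) = 1"
    and pow_enn_finite: "(\<integral>\<^sup>+u. pow_enn (\<rho> u) \<alpha> \<partial>M) < \<top>"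
  using \<rho> q U unfolding Lpow_def prob_density_on_def
  by (auto simp: measurable_restrict_space_lborel_iff set_nn_integral_restrict_space)

private definition "s u = \<rho> u * exp (q u)"
private definition "w u = exp (- (\<alpha> * q u))"

private lemma s_w_measurable: "s \<in> borel_measurable M" "w \<in> borel_measurable M"
  using \<rho>_measurable q_measurable unfolding s_def w_def by measurable

text \<open>Isabelle's convention \<open>0 powr \<alpha> = 0\<close> lets the integral defining the Renyi entropy run over all of U.\<close>
private lemma renyi_integral_tilted:
  "(\<integral>\<^sup>+u\<in>{u\<in>U. \<rho> u > 0}. ennreal (\<rho> u powr \<alpha>) \<partial>lborel) = (\<integral>\<^sup>+u. ennreal (s u powr \<alpha> * w u) \<partial>M)"
  unfolding set_nn_integral_restrict_space[OF U, symmetric] using \<rho>_nonneg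
  by (intro nn_integral_cong)
     (force simp: indicator_def s_def w_def powr_mult exp_powr_real exp_minus field_simps)

lemma renyi_integral_pos_finite:
  "0 < (\<integral>\<^sup>+u\<in>{u\<in>U. \<rho> u > 0}. ennreal (\<rho> u powr \<alpha>) \<partial>lborel)"
  "(\<integral>\<^sup>+u\<in>{u\<in>U. \<rho> u > 0}. ennreal (\<rho> u powr \<alpha>) \<partial>lborel) < \<top>"
proof -
  note [measurable] = \<rho>_measurable
  have "(\<integral>\<^sup>+u\<in>{u\<in>U. \<rho> u > 0}. ennreal (\<rho> u powr \<alpha>) \<partial>lborel) = (\<integral>\<^sup>+u. ennreal (\<rho> u powr \<alpha>) \<partial>M)"
    unfolding set_nn_integral_restrict_space[OF U, symmetric] using \<rho>_nonneg
    by (intro nn_integral_cong) (force simp: indicator_def)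
  moreover have "0 < (\<integral>\<^sup>+u. ennreal (\<rho> u powr \<alpha>) \<partial>M)"
    using \<rho>_integral by (intro nn_integral_pos_on_support[where \<rho>=\<rho>]) auto
  moreover have "(\<integral>\<^sup>+u. ennreal (\<rho> u powr \<alpha>) \<partial>M) \<le> (\<integral>\<^sup>+u. pow_enn (\<rho> u) \<alpha> \<partial>M)"
    using \<rho>_nonneg by (intro nn_integral_mono) (force simp: pow_enn_def space_M)
  ultimately show "0 < (\<integral>\<^sup>+u\<in>{u\<in>U. \<rho> u > 0}. ennreal (\<rho> u powr \<alpha>) \<partial>lborel)"
    and "(\<integral>\<^sup>+u\<in>{u\<in>U. \<rho> u > 0}. ennreal (\<rho> u powr \<alpha>) \<partial>lborel) < \<top>"
    using pow_enn_finite by auto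
qed

lemma partition_pos: "0 < (\<integral>\<^sup>+u\<in>U. ennreal (exp (- (\<alpha> * q u))) \<partial>lborel)"
proof -
  note [measurable] = q_measurable
  show ?thesis
    unfolding set_nn_integral_restrict_space[OF U]
    using \<rho>_integral by (intro nn_integral_pos_on_support[where \<rho>=\<rho>]) auto
qed

text \<open>For \<open>\<alpha> \<le> 0\<close>, \<open>pow_enn\<close> is infinite where \<rho> vanishes, so \<open>\<rho> > 0\<close> almost everywhere.\<close>
private lemma AE_s_dom: "AE u in M. s u > 0 \<or> (s u = 0 \<and> \<alpha> > 0)"
proof -
  note [measurable] = \<rho>_measurable
  have "(\<lambda>u. pow_enn (\<rho> u) \<alpha>) \<in> borel_measurable M"
    unfolding pow_enn_def by measurable
  then have "AE u in M. pow_enn (\<rho> u) \<alpha> \<noteq> \<top>"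
    using nn_integral_PInf_AE pow_enn_finite by (simp add: less_top)
  then show ?thesis
    using AE_space by eventually_elim
      (use \<rho>_nonneg in \<open>force simp: pow_enn_def s_def space_M zero_less_mult_iff split: if_splits\<close>)
qed

private lemma AE_proportional_iff_gibbs:
  "(\<exists>c>0. AE u in M. \<rho> u = c * exp (- q u)) \<longleftrightarrow> (AE u in M. \<rho> u = gibbs_density U q u)"
proof -
  note [measurable] = q_measurable
  define Z where "Z = (\<integral>\<^sup>+u. ennreal (exp (- q u)) \<partial>M)"
  have gibbs: "gibbs_density U q u = exp (- q u) / enn2real Z" for u
    unfolding gibbs_density_def Z_def set_nn_integral_restrict_space[OF U] ..
  show ?thesis
  proof
    assume "\<exists>c>0. AE u in M. \<rho> u = c * exp (- q u)"
    then obtain c where c: "c > 0" and \<rho>_AE: "AE u in M. \<rho> u = c * exp (- q u)"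
      by blast
    have "ennreal c * Z = 1"
      unfolding Z_def \<rho>_integral[symmetric] using c \<rho>_AE
      by (subst nn_integral_cmult[symmetric]) (auto intro!: nn_integral_cong_AE simp: ennreal_mult)
    then have "Z = ennreal (1 / c)"
      using c ennreal_mult_cancel_left[of "ennreal c" Z "ennreal (1 / c)"]
      by (simp add: ennreal_mult[symmetric])
    then show "AE u in M. \<rho> u = gibbs_density U q u"
      using \<rho>_AE c by (simp add: gibbs mult.commute)
  next
    assume "AE u in M. \<rho> u = gibbs_density U q u"
    then have \<rho>_AE: "AE u in M. \<rho> u = 1 / enn2real Z * exp (- q u)"
      by (simp add: gibbs)
    have "enn2real Z \<noteq> 0"
    proof
      assume "enn2real Z = 0"
      then have "(\<integral>\<^sup>+u. ennreal (\<rho> u) \<partial>M) = (\<integral>\<^sup>+u. 0 \<partial>M)"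
        using \<rho>_AE by (intro nn_integral_cong_AE) auto
      then show False
        using \<rho>_integral by simp
    qed
    then have "1 / enn2real Z > 0"
      using enn2real_nonneg[of Z] by (simp add: order_less_le)
    then show "\<exists>c>0. AE u in M. \<rho> u = c * exp (- q u)"
      using \<rho>_AE by blast
  qed
qed

private definition "power_integral = enn2real (\<integral>\<^sup>+u\<in>{u\<in>U. \<rho> u > 0}. ennreal (\<rho> u powr \<alpha>) \<partial>lborel)"
private definition "weight_integral = enn2real (\<integral>\<^sup>+u\<in>U. ennreal (exp (- (\<alpha> * q u))) \<partial>lborel)"

private lemma power_integral:
  shows "power_integral > 0"
    and "(\<integral>\<^sup>+u. ennreal (s u powr \<alpha> * w u) \<partial>M) = ennreal power_integral"
    and "integrable M (\<lambda>u. s u powr \<alpha> * w u)" "(\<integral>u. s u powr \<alpha> * w u \<partial>M) = power_integral"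
proof -
  note [measurable] = q_measurable s_w_measurable
  show pos: "power_integral > 0" and eq: "(\<integral>\<^sup>+u. ennreal (s u powr \<alpha> * w u) \<partial>M) = ennreal power_integral"
    using renyi_integral_pos_finite unfolding power_integral_def renyi_integral_tilted
    by (auto simp: enn2real_positive_iff less_top)
  show "integrable M (\<lambda>u. s u powr \<alpha> * w u)" "(\<integral>u. s u powr \<alpha> * w u \<partial>M) = power_integral"
    using pos eq nn_integral_eq_integrable[of "\<lambda>u. s u powr \<alpha> * w u" M power_integral]
    by (auto simp: w_def)
qed

private lemma weight_integral:
  shows "weight_integral > 0" and "(\<integral>\<^sup>+u. ennreal (w u) \<partial>M) = ennreal weight_integral"
    and "integrable M w" "(\<integral>u. w u \<partial>M) = weight_integral"
proof -
  note [measurable] = q_measurable s_w_measurable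
  show pos: "weight_integral > 0" and eq: "(\<integral>\<^sup>+u. ennreal (w u) \<partial>M) = ennreal weight_integral"
    using partition_pos C_fin U unfolding weight_integral_def w_def
    by (auto simp: set_nn_integral_restrict_space enn2real_positive_iff less_top)
  show "integrable M w" "(\<integral>u. w u \<partial>M) = weight_integral"
    using pos eq nn_integral_eq_integrable[of w M weight_integral] by (auto simp: w_def[abs_def])
qed

lemma renyi_holder:
  defines "A \<equiv> \<integral>\<^sup>+u\<in>U. ennreal (\<rho> u * exp ((1 - \<alpha>) * q u)) \<partial>lborel"
    and "B \<equiv> enn2real (\<integral>\<^sup>+u\<in>{u\<in>U. \<rho> u > 0}. ennreal (\<rho> u powr \<alpha>) \<partial>lborel)"
    and "C \<equiv> enn2real (\<integral>\<^sup>+u\<in>U. ennreal (exp (- (\<alpha> * q u))) \<partial>lborel)"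
  shows "\<alpha> < 1 \<Longrightarrow> ennreal (B powr (1 / \<alpha>) * C powr (1 - 1 / \<alpha>)) \<le> A"
    and "\<alpha> > 1 \<Longrightarrow> A \<le> ennreal (B powr (1 / \<alpha>) * C powr (1 - 1 / \<alpha>))"
    and "A = ennreal (B powr (1 / \<alpha>) * C powr (1 - 1 / \<alpha>))
      \<longleftrightarrow> (AE u in lborel. u \<in> U \<longrightarrow> \<rho> u = gibbs_density U q u)"
proof -
  note [measurable] = q_measurable s_w_measurable
  have A: "A = (\<integral>\<^sup>+u. ennreal (s u * w u) \<partial>M)"
    unfolding A_def set_nn_integral_restrict_space[OF U] s_def w_def
    by (simp add: algebra_simps flip: exp_add)
  have B: "B = power_integral" and C: "C = weight_integral"
    unfolding B_def C_def power_integral_def weight_integral_def by simp_all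
  define l where "l = (B / C) powr (1 / \<alpha>)"
  have l: "l > 0" "(\<integral>u. s u powr \<alpha> * w u \<partial>M) = l powr \<alpha> * (\<integral>u. w u \<partial>M)"
    using power_integral weight_integral \<alpha> by (auto simp: B C l_def powr_powr)
  have l_C: "l * C = B powr (1 / \<alpha>) * C powr (1 - 1 / \<alpha>)"
    using power_integral(1) weight_integral(1) by (simp add: B C l_def powr_divide powr_diff field_simps)
  note tangent = nn_integral_powr_tangent[OF \<alpha> l(1) _ _ _ AE_s_dom power_integral(3)
      weight_integral(3) l(2), unfolded weight_integral(4) C[symmetric] A[symmetric] l_C]
  show "\<alpha> < 1 \<Longrightarrow> ennreal (B powr (1 / \<alpha>) * C powr (1 - 1 / \<alpha>)) \<le> A"
    and "\<alpha> > 1 \<Longrightarrow> A \<le> ennreal (B powr (1 / \<alpha>) * C powr (1 - 1 / \<alpha>))"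
    using tangent(1,2) by (auto simp: w_def)
  show "A = ennreal (B powr (1 / \<alpha>) * C powr (1 - 1 / \<alpha>))
      \<longleftrightarrow> (AE u in lborel. u \<in> U \<longrightarrow> \<rho> u = gibbs_density U q u)"
    unfolding AE_M_iff[symmetric] AE_proportional_iff_gibbs[symmetric]
  proof
    assume "A = ennreal (B powr (1 / \<alpha>) * C powr (1 - 1 / \<alpha>))"
    then have "AE u in M. s u = l"
      by (intro tangent(3)) (auto simp: w_def)
    then have "AE u in M. \<rho> u = l * exp (- q u)"
      by eventually_elim (simp add: s_def exp_minus field_simps)
    then show "\<exists>c>0. AE u in M. \<rho> u = c * exp (- q u)"
      using l(1) by blast
  next
    assume "\<exists>c>0. AE u in M. \<rho> u = c * exp (- q u)"
    then obtain c where "c > 0" and \<rho>_AE: "AE u in M. \<rho> u = c * exp (- q u)"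
      by blast
    have s_AE: "AE u in M. s u = c"
      using \<rho>_AE by eventually_elim (simp add: s_def exp_minus)
    have "ennreal B = ennreal (c powr \<alpha>) * ennreal C"
      unfolding B C power_integral(2)[symmetric] weight_integral(2)[symmetric] using s_AE
      by (subst nn_integral_cmult[symmetric]) (auto intro!: nn_integral_cong_AE simp: ennreal_mult w_def)
    then have "l = c"
      using power_integral(1) weight_integral(1) \<open>c > 0\<close> \<alpha>
      by (simp add: B C l_def powr_powr flip: ennreal_mult)
    moreover have "A = ennreal c * ennreal C"
      unfolding A C weight_integral(2)[symmetric] using s_AE \<open>c > 0\<close>
      by (subst nn_integral_cmult[symmetric])
         (auto intro!: nn_integral_cong_AE elim!: eventually_mono simp: w_def ennreal_mult[symmetric])
    ultimately show "A = ennreal (B powr (1 / \<alpha>) * C powr (1 - 1 / \<alpha>))"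
      unfolding l_C[symmetric] using weight_integral(1) \<open>c > 0\<close> by (simp add: C ennreal_mult[symmetric])
  qed
qed

end

lemma renyi_variational:
  fixes U :: "'b::euclidean_space set" and \<rho> q :: "'b \<Rightarrow> real" and \<eta> :: real
  assumes U: "U \<in> sets borel" and \<eta>: "\<eta> \<noteq> 0" "\<eta> \<noteq> 1"
    and \<rho>: "\<rho> \<in> Lpow (1 - \<eta>) U" and q: "q \<in> borel_measurable (restrict_space borel U)"
    and C_fin: "(\<integral>\<^sup>+u\<in>U. ennreal (exp (- ((1 - \<eta>) * q u))) \<partial>lborel) < \<top>"
  defines "v \<equiv> ln (enn2real (\<integral>\<^sup>+u\<in>U. ennreal (exp (- ((1 - \<eta>) * q u))) \<partial>lborel)) / (\<eta> - 1)"
    and "F \<equiv> \<integral>\<^sup>+u\<in>U. ennreal (\<rho> u * exp (\<eta> * (q u - renyi (1 - \<eta>) U \<rho>))) \<partial>lborel"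
  shows "\<eta> > 0 \<Longrightarrow> ennreal (exp (\<eta> * v)) \<le> F"
    and "\<eta> < 0 \<Longrightarrow> F \<le> ennreal (exp (\<eta> * v))"
    and "F = ennreal (exp (\<eta> * v)) \<longleftrightarrow> (AE u in lborel. u \<in> U \<longrightarrow> \<rho> u = gibbs_density U q u)"
proof -
  define \<alpha> where "\<alpha> = 1 - \<eta>"
  have \<alpha>: "\<alpha> \<noteq> 0" "\<alpha> \<noteq> 1" "1 - \<alpha> = \<eta>"
    using \<eta> by (auto simp: \<alpha>_def)
  define A where "A = (\<integral>\<^sup>+u\<in>U. ennreal (\<rho> u * exp (\<eta> * q u)) \<partial>lborel)"
  define B where "B = enn2real (\<integral>\<^sup>+u\<in>{u\<in>U. \<rho> u > 0}. ennreal (\<rho> u powr \<alpha>) \<partial>lborel)"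
  define C where "C = enn2real (\<integral>\<^sup>+u\<in>U. ennreal (exp (- (\<alpha> * q u))) \<partial>lborel)"
  note facts = U \<alpha>(1,2) \<rho>[folded \<alpha>_def] q C_fin[folded \<alpha>_def]
  note holder = renyi_holder[OF facts, unfolded \<alpha>(3), folded A_def B_def C_def]
  have "B > 0"
    using renyi_integral_pos_finite[OF facts] unfolding B_def
    by (simp add: enn2real_positive_iff less_top)
  have "C > 0"
    using partition_pos[OF facts] C_fin unfolding C_def \<alpha>_def
    by (simp add: enn2real_positive_iff less_top)
  define H where "H = renyi (1 - \<eta>) U \<rho>"
  have H: "\<eta> * H = ln B / \<alpha>"
    using \<eta> unfolding H_def renyi_def B_def \<alpha>_def by simp
  have F_A: "F = ennreal (exp (- (\<eta> * H))) * A"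
  proof -
    have [measurable]: "\<rho> \<in> borel_measurable (restrict_space lborel U)"
        "q \<in> borel_measurable (restrict_space lborel U)"
      using \<rho> q by (auto simp: Lpow_def prob_density_on_def measurable_restrict_space_lborel_iff)
    have pointwise: "\<rho> u * exp (\<eta> * (q u - H)) = exp (- (\<eta> * H)) * (\<rho> u * exp (\<eta> * q u))" for u
      by (simp add: algebra_simps flip: exp_add)
    have "(\<lambda>u. ennreal (\<rho> u * exp (\<eta> * (q u - H))))
        = (\<lambda>u. ennreal (exp (- (\<eta> * H))) * ennreal (\<rho> u * exp (\<eta> * q u)))"
      unfolding pointwise by (simp add: ennreal_mult')
    then show ?thesis
      unfolding F_def A_def H_def[symmetric] set_nn_integral_restrict_space[OF U]
      by (simp add: nn_integral_cmult)
  qed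
  have "exp (- (\<eta> * H)) * (B powr (1 / \<alpha>) * C powr (1 - 1 / \<alpha>)) = exp (\<eta> * v)"
  proof -
    have "B powr (1 / \<alpha>) = exp (\<eta> * H)"
      using \<open>B > 0\<close> by (simp add: H powr_def)
    moreover have "C powr (1 - 1 / \<alpha>) = exp (\<eta> * v)"
      using \<open>C > 0\<close> \<alpha> \<eta> unfolding v_def C_def[unfolded \<alpha>_def, symmetric]
      by (simp add: powr_def \<alpha>_def field_simps)
    ultimately show ?thesis
      by (simp add: exp_minus field_simps)
  qed
  then have optimum: "ennreal (exp (- (\<eta> * H))) * ennreal (B powr (1 / \<alpha>) * C powr (1 - 1 / \<alpha>))
      = ennreal (exp (\<eta> * v))"
    by (simp add: ennreal_mult[symmetric])
  show "\<eta> > 0 \<Longrightarrow> ennreal (exp (\<eta> * v)) \<le> F"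
    unfolding F_A optimum[symmetric] by (intro mult_left_mono holder(1)) (auto simp: \<alpha>_def)
  show "\<eta> < 0 \<Longrightarrow> F \<le> ennreal (exp (\<eta> * v))"
    unfolding F_A optimum[symmetric] by (intro mult_left_mono holder(2)) (auto simp: \<alpha>_def)
  show "F = ennreal (exp (\<eta> * v)) \<longleftrightarrow> (AE u in lborel. u \<in> U \<longrightarrow> \<rho> u = gibbs_density U q u)"
    unfolding holder(3)[symmetric] F_A optimum[symmetric] by (simp add: ennreal_mult_cancel_left)
qed

section \<open>Backward induction\<close>

lemma sets_borel_Times:
  fixes X :: "'a::euclidean_space set" and U :: "'b::euclidean_space set"
  shows "X \<in> sets borel \<Longrightarrow> U \<in> sets borel \<Longrightarrow> X \<times> U \<in> sets borel"
  using pair_measureI[of X borel U borel] unfolding borel_prod .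

lemma measurable_restrict_Times_section:
  fixes X :: "'a::euclidean_space set" and U :: "'b::euclidean_space set"
  assumes f: "f \<in> borel_measurable (restrict_space borel (X \<times> U))" and x: "x \<in> X"
  shows "(\<lambda>u. f (x, u)) \<in> borel_measurable (restrict_space borel U)"
proof -
  have "Pair x \<in> (borel :: 'b measure) \<rightarrow>\<^sub>M borel"
    unfolding borel_prod[symmetric] by measurable
  then have "Pair x \<in> restrict_space borel U \<rightarrow>\<^sub>M restrict_space borel (X \<times> U)"
    by (rule measurable_restrict_space3) (use x in auto)
  from measurable_comp[OF this f] show ?thesis
    by (simp add: comp_def)
qed

lemma measurable_restrict_Times_fst:
  fixes X :: "'a::euclidean_space set" and U :: "'b::euclidean_space set"
  assumes "h \<in> borel_measurable (restrict_space borel X)"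
  shows "(\<lambda>p. h (fst p)) \<in> borel_measurable (restrict_space borel (X \<times> U))"
proof -
  have "fst \<in> (borel :: ('a \<times> 'b) measure) \<rightarrow>\<^sub>M borel"
    unfolding borel_prod[symmetric] by measurable
  then have "fst \<in> restrict_space borel (X \<times> U) \<rightarrow>\<^sub>M restrict_space borel X"
    by (rule measurable_restrict_space3) auto
  from measurable_comp[OF this assms] show ?thesis
    by (simp add: comp_def)
qed

lemma measurable_set_nn_integral_snd:
  fixes X :: "'a::euclidean_space set" and U :: "'b::euclidean_space set" and g :: "'a \<Rightarrow> 'b \<Rightarrow> ennreal"
  assumes X: "X \<in> sets borel" and U: "U \<in> sets borel"
    and g: "(\<lambda>(x, u). g x u) \<in> borel_measurable (restrict_space borel (X \<times> U))"
  shows "(\<lambda>x. \<integral>\<^sup>+u\<in>U. g x u \<partial>lborel) \<in> borel_measurable (restrict_space borel X)"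
proof -
  define G where "G p = (case p of (x, u) \<Rightarrow> g x u) * indicator (X \<times> U) p" for p
  have "G \<in> borel_measurable borel"
    using g sets_borel_Times[OF X U] unfolding G_def
    by (simp add: borel_measurable_restrict_space_iff_ennreal)
  then have "G \<in> borel_measurable (lborel \<Otimes>\<^sub>M lborel)"
    unfolding lborel_prod by (simp add: measurable_lborel1)
  then have "(\<lambda>x. \<integral>\<^sup>+u. G (x, u) \<partial>lborel) \<in> borel_measurable (lborel :: 'a measure)"
    by (rule lborel.borel_measurable_nn_integral_fst)
  then have "(\<lambda>x. \<integral>\<^sup>+u. G (x, u) \<partial>lborel) \<in> borel_measurable (restrict_space borel X)"
    by (intro measurable_restrict_space1) (simp add: measurable_lborel1)
  then show ?thesis
    by (rule measurable_cong[THEN iffD1, rotated])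
       (auto simp: G_def space_restrict_space indicator_def intro!: nn_integral_cong)
qed

lemma gibbs_density_Lpow:
  fixes U :: "'b::euclidean_space set" and q :: "'b \<Rightarrow> real"
  assumes U: "U \<in> sets borel" "emeasure lborel U > 0"
    and q: "q \<in> borel_measurable (restrict_space borel U)"
    and Z_fin: "(\<integral>\<^sup>+u\<in>U. ennreal (exp (- q u)) \<partial>lborel) < \<top>"
    and C_fin: "(\<integral>\<^sup>+u\<in>U. ennreal (exp (- (\<alpha> * q u))) \<partial>lborel) < \<top>"
  shows "gibbs_density U q \<in> Lpow \<alpha> U"
proof -
  let ?M = "restrict_space lborel U"
  have [measurable]: "q \<in> borel_measurable ?M"
    using q by (simp add: measurable_restrict_space_lborel_iff)
  define Z where "Z = enn2real (\<integral>\<^sup>+u\<in>U. ennreal (exp (- q u)) \<partial>lborel)"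
  have Z: "Z > 0" "(\<integral>\<^sup>+u. ennreal (exp (- q u)) \<partial>?M) = ennreal Z"
    using set_nn_integral_exp_pos[OF U, of "\<lambda>u. - q u"] q Z_fin U unfolding Z_def
    by (auto simp: enn2real_positive_iff less_top set_nn_integral_restrict_space)
  have gibbs: "gibbs_density U q u = exp (- q u) / Z" for u
    unfolding gibbs_density_def Z_def ..
  have "(\<integral>\<^sup>+u. ennreal (gibbs_density U q u) \<partial>?M) = ennreal (1 / Z) * ennreal Z"
    unfolding Z(2)[symmetric] using Z(1)
    by (subst nn_integral_cmult[symmetric]) (auto simp: gibbs ennreal_mult[symmetric] divide_inverse mult.commute)
  also have "\<dots> = 1"
    using Z(1) by (simp add: ennreal_mult[symmetric])
  finally have integral: "(\<integral>\<^sup>+u\<in>U. ennreal (gibbs_density U q u) \<partial>lborel) = 1"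
    using U by (simp add: set_nn_integral_restrict_space)
  have "(exp (- q u) / Z) powr \<alpha> = Z powr (- \<alpha>) * exp (- (\<alpha> * q u))" for u
    using Z(1) by (simp add: powr_divide exp_powr_real powr_minus field_simps)
  then have "(\<integral>\<^sup>+u. pow_enn (gibbs_density U q u) \<alpha> \<partial>?M)
      = ennreal (Z powr (- \<alpha>)) * (\<integral>\<^sup>+u. ennreal (exp (- (\<alpha> * q u))) \<partial>?M)"
    using Z(1)
    by (subst nn_integral_cmult[symmetric]) (auto simp: gibbs pow_enn_def ennreal_mult[symmetric])
  also have "\<dots> < \<top>"
    using C_fin U by (simp add: set_nn_integral_restrict_space ennreal_mult_less_top)
  finally have "(\<integral>\<^sup>+u\<in>U. pow_enn (gibbs_density U q u) \<alpha> \<partial>lborel) < \<top>"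
    using U by (simp add: set_nn_integral_restrict_space)
  moreover have "gibbs_density U q \<in> borel_measurable (restrict_space borel U)"
    unfolding gibbs_density_def using q by measurable
  ultimately show ?thesis
    unfolding Lpow_def prob_density_on_def using integral Z(1) by (simp add: gibbs)
qed

lemma ln_enn_ennreal: "r > 0 \<Longrightarrow> ln_enn (ennreal r) = ereal (ln r)"
  unfolding ln_enn_def by auto

lemma exp_e_ereal: "exp_e (ereal r) = ennreal (exp r)"
  unfolding exp_e_def by auto

lemma ln_enn_mono: "a \<le> b \<Longrightarrow> ln_enn a \<le> ln_enn b"
  by (cases a; cases b) (auto simp: ln_enn_def top_unique ennreal_le_iff2)

lemma ereal_mult_left_mono_neg:
  fixes a b :: ereal
  shows "c < 0 \<Longrightarrow> a \<le> b \<Longrightarrow> ereal c * b \<le> ereal c * a"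
  by (cases a; cases b) (auto simp: mult_left_mono_neg)

lemma scaled_ln_enn_eq_iff:
  assumes "\<eta> \<noteq> 0"
  shows "ereal (1 / \<eta>) * ln_enn R = ereal a \<longleftrightarrow> R = ennreal (exp (\<eta> * a))"
proof
  assume eq: "ereal (1 / \<eta>) * ln_enn R = ereal a"
  then have "R \<noteq> 0" "R \<noteq> \<top>"
    using assms by (auto simp: ln_enn_def split: if_splits)
  then obtain r where r: "R = ennreal r" "r > 0"
    by (cases R) (auto simp: top_ennreal.rep_eq)
  with eq assms have "ln r = \<eta> * a"
    by (simp add: ln_enn_ennreal field_simps)
  with r show "R = ennreal (exp (\<eta> * a))"
    by (metis exp_ln)
qed (use assms in \<open>simp add: ln_enn_ennreal\<close>)

lemma scaled_ln_enn_mono: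
  assumes "(\<eta> > 0 \<and> R \<le> R') \<or> (\<eta> < 0 \<and> R' \<le> R)"
  shows "ereal (1 / \<eta>) * ln_enn R \<le> ereal (1 / \<eta>) * ln_enn R'"
  using assms by (auto intro: ereal_mult_left_mono ereal_mult_left_mono_neg ln_enn_mono)

locale risk_sensitive_mdp =
  fixes \<eta> :: real and T :: nat
    and X :: "'a::euclidean_space set" and U :: "'b::euclidean_space set"
    and K :: "'a \<Rightarrow> 'b \<Rightarrow> 'a measure"
    and c :: "nat \<Rightarrow> 'a \<Rightarrow> 'b \<Rightarrow> real" and cT :: "'a \<Rightarrow> real"
  assumes eta: "\<eta> \<noteq> 0" "\<eta> \<noteq> 1"
    and X_meas: "X \<in> sets borel"
    and U_meas: "U \<in> sets borel" and U_pos: "emeasure lborel U > 0"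
    and K_kernel: "(\<lambda>(x, u). K x u) \<in> restrict_space borel (X \<times> U) \<rightarrow>\<^sub>M prob_algebra borel"
    and K_X: "\<forall>x\<in>X. \<forall>u\<in>U. emeasure (K x u) X = 1"
    and c_meas: "\<forall>t<T. (\<lambda>(x, u). c t x u) \<in> borel_measurable (restrict_space borel (X \<times> U))"
    and cT_meas: "cT \<in> borel_measurable (restrict_space borel X)"
    and Q_finite: "\<forall>t<T. \<forall>x\<in>X. \<forall>u\<in>U. \<bar>Q_fn \<eta> T X U K c cT t x u\<bar> \<noteq> \<infinity>"
    and int1: "\<forall>t<T. \<forall>x\<in>X. (\<integral>\<^sup>+u\<in>U. exp_e (- Q_fn \<eta> T X U K c cT t x u) \<partial>lborel) < \<top>"
    and int2: "\<forall>t<T. \<forall>x\<in>X.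
                 (\<integral>\<^sup>+u\<in>U. exp_e (- (ereal (1 - \<eta>) * Q_fn \<eta> T X U K c cT t x u)) \<partial>lborel) < \<top>"
begin

abbreviation "Q \<equiv> Q_fn \<eta> T X U K c cT"
abbreviation "V \<equiv> value_fn \<eta> T X U K c cT"
abbreviation "R \<equiv> risk_obj \<eta> U K c cT"
abbreviation "\<pi>\<^sub>o\<^sub>p\<^sub>t \<equiv> opt_policy \<eta> T X U K c cT"
abbreviation "admissible \<equiv> admissible_policy \<eta> T X U"

text \<open>Q and V are extended reals; their real parts represent them where they are finite, which for Q
  is assumed on \<open>X \<times> U\<close> and for V on X is part of the induction invariant.\<close>
definition "Qr t x u = real_of_ereal (Q t x u)"
definition "Vr t x = real_of_ereal (V t x)"
definition "V_closed t x = ln (enn2real (\<integral>\<^sup>+u\<in>U. ennreal (exp (- ((1 - \<eta>) * Qr t x u))) \<partial>lborel)) / (\<eta> - 1)"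
definition "exp_free_energy t x \<rho> = (\<integral>\<^sup>+u\<in>U. ennreal (\<rho> u * exp (\<eta> * (Qr t x u - renyi (1 - \<eta>) U \<rho>))) \<partial>lborel)"

text \<open>The cost \<open>(1/\<eta>) ln R\<close> is increasing in R for \<eta> > 0 and decreasing for \<eta> < 0, so optimality
  of \<open>V\<^sub>t\<close> is a lower bound on R in the first case and an upper bound in the second.\<close>
definition dp_invariant :: "nat \<Rightarrow> bool" where
  "dp_invariant t \<longleftrightarrow> admissible t \<pi>\<^sub>o\<^sub>p\<^sub>t
     \<and> (\<forall>x\<in>X. V t x = ereal (Vr t x)) \<and> Vr t \<in> borel_measurable (restrict_space borel X)
     \<and> (\<forall>\<pi> x. admissible t \<pi> \<longrightarrow> x \<in> X \<longrightarrow>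
          (\<eta> > 0 \<longrightarrow> ennreal (exp (\<eta> * Vr t x)) \<le> R \<pi> (T - t) t x)
        \<and> (\<eta> < 0 \<longrightarrow> R \<pi> (T - t) t x \<le> ennreal (exp (\<eta> * Vr t x))))
     \<and> (\<forall>x\<in>X. R \<pi>\<^sub>o\<^sub>p\<^sub>t (T - t) t x = ennreal (exp (\<eta> * Vr t x)))"

lemma Vr_terminal: "Vr T = cT"
  by (simp add: Vr_def value_fn_def fun_eq_iff)

lemma dp_invariant_terminal: "dp_invariant T"
  unfolding dp_invariant_def admissible_policy_def Vr_terminal
  using cT_meas by (auto simp: value_fn_def)

lemma K_prob_space:
  assumes "x \<in> X" "u \<in> U"
  shows "prob_space (K x u)" and "sets (K x u) = sets borel"
proof -
  have "K x u \<in> space (prob_algebra borel)"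
    using measurable_space[OF K_kernel, of "(x, u)"] assms sets_borel_Times[OF X_meas U_meas]
    by (simp add: space_restrict_space)
  then show "prob_space (K x u)" "sets (K x u) = sets borel"
    by (auto simp: space_prob_algebra)
qed

lemma AE_K_in_X: "x \<in> X \<Longrightarrow> u \<in> U \<Longrightarrow> AE y in K x u. y \<in> X"
  using prob_space.AE_in_set_eq_1[OF K_prob_space(1)] K_prob_space(2) X_meas K_X
  by (simp add: measure_def)

lemma measurable_kernel_nn_integral:
  assumes [measurable]: "g \<in> borel_measurable borel"
  shows "(\<lambda>(x, u). \<integral>\<^sup>+y. g y \<partial>K x u) \<in> borel_measurable (restrict_space borel (X \<times> U))"
  using nn_integral_measurable_subprob_algebra2[where f="\<lambda>_. g",
      OF _ measurable_prob_algebraD[OF K_kernel]]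
  by (simp add: split_beta')

lemma risk_obj_step:
  assumes "t < T"
  shows "R \<pi> (T - t) t x = (\<integral>\<^sup>+u\<in>U. ennreal (\<pi> t x u * exp (\<eta> * (c t x u - renyi (1 - \<eta>) U (\<pi> t x))))
      * (\<integral>\<^sup>+y. R \<pi> (T - Suc t) (Suc t) y \<partial>K x u) \<partial>lborel)"
  using assms by (simp add: Suc_diff_Suc[symmetric])

lemma Q_eq_Qr: "t < T \<Longrightarrow> x \<in> X \<Longrightarrow> u \<in> U \<Longrightarrow> Q t x u = ereal (Qr t x u)"
  using Q_finite by (simp add: Qr_def ereal_real)

lemma nn_integral_K_exp_Vr:
  assumes t: "t < T" and inv: "dp_invariant (Suc t)" and x: "x \<in> X" and u: "u \<in> U"
  shows "(\<integral>\<^sup>+y. ennreal (exp (\<eta> * Vr (Suc t) y)) \<partial>K x u) = ennreal (exp (\<eta> * (Qr t x u - c t x u)))"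
proof -
  define I where "I = (\<integral>\<^sup>+y. ennreal (exp (\<eta> * Vr (Suc t) y)) \<partial>K x u)"
  have "(\<integral>\<^sup>+y. exp_e (ereal \<eta> * V (Suc t) y) \<partial>K x u) = I"
    unfolding I_def using AE_K_in_X[OF x u] inv
    by (intro nn_integral_cong_AE) (auto elim!: eventually_mono simp: dp_invariant_def exp_e_ereal)
  then have "ereal (c t x u) + ereal (1 / \<eta>) * ln_enn I = ereal (Qr t x u)"
    using Q_eq_Qr[OF t x u] by (simp add: Q_fn_def)
  then have "ereal (1 / \<eta>) * ln_enn I = ereal (Qr t x u - c t x u)"
    by (cases "ereal (1 / \<eta>) * ln_enn I") auto
  then show ?thesis
    unfolding I_def using scaled_ln_enn_eq_iff[OF eta(1)] by blast
qed

lemma Qr_measurable: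
  assumes t: "t < T" and inv: "dp_invariant (Suc t)"
  shows "(\<lambda>(x, u). Qr t x u) \<in> borel_measurable (restrict_space borel (X \<times> U))"
proof -
  define g where "g y = ennreal (exp (\<eta> * Vr (Suc t) y)) * indicator X y" for y
  have "g \<in> borel_measurable borel"
    using inv X_meas unfolding g_def dp_invariant_def
    by (subst borel_measurable_restrict_space_iff_ennreal[symmetric]) auto
  then have [measurable]: "(\<lambda>(x, u). \<integral>\<^sup>+y. g y \<partial>K x u) \<in> borel_measurable (restrict_space borel (X \<times> U))"
    by (rule measurable_kernel_nn_integral)
  have [measurable]: "(\<lambda>(x, u). c t x u) \<in> borel_measurable (restrict_space borel (X \<times> U))"
    using c_meas t by blast
  have Qr_eq: "Qr t x u = c t x u + ln (enn2real (\<integral>\<^sup>+y. g y \<partial>K x u)) / \<eta>" if "x \<in> X" "u \<in> U" for x u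
  proof -
    have "(\<integral>\<^sup>+y. g y \<partial>K x u) = ennreal (exp (\<eta> * (Qr t x u - c t x u)))"
      unfolding g_def nn_integral_K_exp_Vr[OF t inv that, symmetric] using AE_K_in_X[OF that]
      by (intro nn_integral_cong_AE) (auto elim!: eventually_mono)
    then show ?thesis
      using eta by simp
  qed
  have "(\<lambda>p. (\<lambda>(x, u). c t x u) p + ln (enn2real ((\<lambda>(x, u). \<integral>\<^sup>+y. g y \<partial>K x u) p)) / \<eta>)
      \<in> borel_measurable (restrict_space borel (X \<times> U))"
    by measurable
  then show ?thesis
    by (rule measurable_cong[THEN iffD1, rotated]) (auto simp: space_restrict_space Qr_eq)
qed

lemma opt_policy_eq_gibbs:
  assumes "t < T" "x \<in> X"
  shows "\<pi>\<^sub>o\<^sub>p\<^sub>t t x = gibbs_density U (Qr t x)"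
proof -
  have "Z_fn \<eta> T X U K c cT t x = (\<integral>\<^sup>+u\<in>U. ennreal (exp (- Qr t x u)) \<partial>lborel)"
    unfolding Z_fn_def using Q_eq_Qr[OF assms]
    by (intro nn_integral_cong) (auto simp: indicator_def exp_e_ereal)
  then show ?thesis
    by (simp add: fun_eq_iff opt_policy_def gibbs_density_def Qr_def)
qed

lemma Qr_section_measurable:
  "t < T \<Longrightarrow> dp_invariant (Suc t) \<Longrightarrow> x \<in> X \<Longrightarrow> Qr t x \<in> borel_measurable (restrict_space borel U)"
  using measurable_restrict_Times_section[OF Qr_measurable] by simp

lemma partition_finite:
  assumes "t < T" "x \<in> X"
  shows "(\<integral>\<^sup>+u\<in>U. ennreal (exp (- Qr t x u)) \<partial>lborel) < \<top>"
    and "(\<integral>\<^sup>+u\<in>U. ennreal (exp (- ((1 - \<eta>) * Qr t x u))) \<partial>lborel) < \<top>"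
proof -
  have "(\<integral>\<^sup>+u\<in>U. exp_e (- Q t x u) \<partial>lborel) = (\<integral>\<^sup>+u\<in>U. ennreal (exp (- Qr t x u)) \<partial>lborel)"
    using Q_eq_Qr[OF assms] by (auto intro!: nn_integral_cong simp: indicator_def exp_e_ereal)
  then show "(\<integral>\<^sup>+u\<in>U. ennreal (exp (- Qr t x u)) \<partial>lborel) < \<top>"
    using int1[rule_format, OF assms] by simp
  have "(\<integral>\<^sup>+u\<in>U. exp_e (- (ereal (1 - \<eta>) * Q t x u)) \<partial>lborel)
      = (\<integral>\<^sup>+u\<in>U. ennreal (exp (- ((1 - \<eta>) * Qr t x u))) \<partial>lborel)"
    using Q_eq_Qr[OF assms] by (auto intro!: nn_integral_cong simp: indicator_def exp_e_ereal)
  then show "(\<integral>\<^sup>+u\<in>U. ennreal (exp (- ((1 - \<eta>) * Qr t x u))) \<partial>lborel) < \<top>"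
    using int2[rule_format, OF assms] by simp
qed

lemma opt_policy_admissible_step:
  assumes t: "t < T" and inv: "dp_invariant (Suc t)"
  shows "admissible t \<pi>\<^sub>o\<^sub>p\<^sub>t"
proof -
  have [measurable]: "(\<lambda>p. Qr t (fst p) (snd p)) \<in> borel_measurable (restrict_space borel (X \<times> U))"
    using Qr_measurable[OF t inv] by (simp add: split_beta')
  have "(\<lambda>x. \<integral>\<^sup>+u\<in>U. ennreal (exp (- Qr t x u)) \<partial>lborel) \<in> borel_measurable (restrict_space borel X)"
    by (rule measurable_set_nn_integral_snd[OF X_meas U_meas]) measurable
  from measurable_restrict_Times_fst[OF this, where U=U]
  have [measurable]: "(\<lambda>p. \<integral>\<^sup>+u\<in>U. ennreal (exp (- Qr t (fst p) u)) \<partial>lborel)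
      \<in> borel_measurable (restrict_space borel (X \<times> U))" .
  have "(\<lambda>p. exp (- (\<lambda>(x, u). Qr t x u) p) / enn2real (\<integral>\<^sup>+u\<in>U. ennreal (exp (- Qr t (fst p) u)) \<partial>lborel))
      \<in> borel_measurable (restrict_space borel (X \<times> U))"
    by measurable
  then have "(\<lambda>(x, u). \<pi>\<^sub>o\<^sub>p\<^sub>t t x u) \<in> borel_measurable (restrict_space borel (X \<times> U))"
    by (rule measurable_cong[THEN iffD1, rotated])
       (auto simp: space_restrict_space opt_policy_eq_gibbs[OF t] gibbs_density_def)
  moreover have "\<pi>\<^sub>o\<^sub>p\<^sub>t t x \<in> Lpow (1 - \<eta>) U" if "x \<in> X" for x
    unfolding opt_policy_eq_gibbs[OF t that]
    using U_meas U_pos Qr_section_measurable[OF t inv that] partition_finite[OF t that]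
    by (rule gibbs_density_Lpow)
  ultimately show ?thesis
    using inv unfolding dp_invariant_def admissible_policy_def by (metis Suc_leI le_neq_implies_less)
qed

lemma exp_free_energy_bounds:
  assumes t: "t < T" and inv: "dp_invariant (Suc t)" and x: "x \<in> X" and \<rho>: "\<rho> \<in> Lpow (1 - \<eta>) U"
  shows "\<eta> > 0 \<Longrightarrow> ennreal (exp (\<eta> * V_closed t x)) \<le> exp_free_energy t x \<rho>"
    and "\<eta> < 0 \<Longrightarrow> exp_free_energy t x \<rho> \<le> ennreal (exp (\<eta> * V_closed t x))"
    and "exp_free_energy t x \<rho> = ennreal (exp (\<eta> * V_closed t x))
      \<longleftrightarrow> (AE u in lborel. u \<in> U \<longrightarrow> \<rho> u = \<pi>\<^sub>o\<^sub>p\<^sub>t t x u)"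
  using renyi_variational[OF U_meas eta \<rho> Qr_section_measurable[OF t inv x] partition_finite(2)[OF t x]]
  unfolding V_closed_def[symmetric] exp_free_energy_def[symmetric] opt_policy_eq_gibbs[OF t x] by auto

lemma risk_obj_vs_exp_free_energy:
  fixes \<pi> :: "nat \<Rightarrow> 'a \<Rightarrow> 'b \<Rightarrow> real" and x :: 'a
  assumes t: "t < T"
  defines "W u \<equiv> \<integral>\<^sup>+y. R \<pi> (T - Suc t) (Suc t) y \<partial>K x u"
  shows "(\<And>u. u \<in> U \<Longrightarrow> ennreal (exp (\<eta> * (Qr t x u - c t x u))) \<le> W u)
      \<Longrightarrow> exp_free_energy t x (\<pi> t x) \<le> R \<pi> (T - t) t x"
    and "(\<And>u. u \<in> U \<Longrightarrow> W u \<le> ennreal (exp (\<eta> * (Qr t x u - c t x u))))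
      \<Longrightarrow> R \<pi> (T - t) t x \<le> exp_free_energy t x (\<pi> t x)"
    and "(\<And>u. u \<in> U \<Longrightarrow> W u = ennreal (exp (\<eta> * (Qr t x u - c t x u))))
      \<Longrightarrow> R \<pi> (T - t) t x = exp_free_energy t x (\<pi> t x)"
proof -
  define H where "H = renyi (1 - \<eta>) U (\<pi> t x)"
  have integrand: "ennreal (\<pi> t x u * exp (\<eta> * (Qr t x u - H)))
      = ennreal (\<pi> t x u * exp (\<eta> * (c t x u - H))) * ennreal (exp (\<eta> * (Qr t x u - c t x u)))" for u
    by (simp add: ennreal_mult''[symmetric] algebra_simps flip: exp_add)
  have R: "R \<pi> (T - t) t x = (\<integral>\<^sup>+u\<in>U. ennreal (\<pi> t x u * exp (\<eta> * (c t x u - H))) * W u \<partial>lborel)"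
    unfolding risk_obj_step[OF t] W_def H_def ..
  have F: "exp_free_energy t x (\<pi> t x) = (\<integral>\<^sup>+u\<in>U. ennreal (\<pi> t x u * exp (\<eta> * (c t x u - H)))
      * ennreal (exp (\<eta> * (Qr t x u - c t x u))) \<partial>lborel)"
    unfolding exp_free_energy_def H_def[symmetric] integrand ..
  show "(\<And>u. u \<in> U \<Longrightarrow> ennreal (exp (\<eta> * (Qr t x u - c t x u))) \<le> W u)
      \<Longrightarrow> exp_free_energy t x (\<pi> t x) \<le> R \<pi> (T - t) t x"
    unfolding R F by (intro nn_integral_mono) (auto simp: indicator_def intro: mult_left_mono)
  show "(\<And>u. u \<in> U \<Longrightarrow> W u \<le> ennreal (exp (\<eta> * (Qr t x u - c t x u))))
      \<Longrightarrow> R \<pi> (T - t) t x \<le> exp_free_energy t x (\<pi> t x)"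
    unfolding R F by (intro nn_integral_mono) (auto simp: indicator_def intro: mult_left_mono)
  show "(\<And>u. u \<in> U \<Longrightarrow> W u = ennreal (exp (\<eta> * (Qr t x u - c t x u))))
      \<Longrightarrow> R \<pi> (T - t) t x = exp_free_energy t x (\<pi> t x)"
    unfolding R F by (intro nn_integral_cong) (auto simp: indicator_def)
qed

lemma nn_integral_K_risk_obj:
  fixes \<pi> :: "nat \<Rightarrow> 'a \<Rightarrow> 'b \<Rightarrow> real"
  assumes t: "t < T" and inv: "dp_invariant (Suc t)" and x: "x \<in> X" and u: "u \<in> U"
  defines "W \<equiv> \<integral>\<^sup>+y. R \<pi> (T - Suc t) (Suc t) y \<partial>K x u"
  shows "\<eta> > 0 \<Longrightarrow> admissible (Suc t) \<pi> \<Longrightarrow> ennreal (exp (\<eta> * (Qr t x u - c t x u))) \<le> W"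
    and "\<eta> < 0 \<Longrightarrow> admissible (Suc t) \<pi> \<Longrightarrow> W \<le> ennreal (exp (\<eta> * (Qr t x u - c t x u)))"
    and "(\<And>y. y \<in> X \<Longrightarrow> R \<pi> (T - Suc t) (Suc t) y = ennreal (exp (\<eta> * Vr (Suc t) y)))
      \<Longrightarrow> W = ennreal (exp (\<eta> * (Qr t x u - c t x u)))"
  unfolding W_def nn_integral_K_exp_Vr[OF t inv x u, symmetric]
  using AE_K_in_X[OF x u] inv unfolding dp_invariant_def
  by (auto intro!: nn_integral_mono_AE nn_integral_cong_AE elim!: eventually_mono)

lemma admissible_Suc: "admissible t \<pi> \<Longrightarrow> admissible (Suc t) \<pi>"
  by (simp add: admissible_policy_def)

lemma risk_obj_bounds:
  assumes t: "t < T" and inv: "dp_invariant (Suc t)" and \<pi>: "admissible t \<pi>" and x: "x \<in> X"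
  shows "\<eta> > 0 \<Longrightarrow> ennreal (exp (\<eta> * V_closed t x)) \<le> R \<pi> (T - t) t x"
    and "\<eta> < 0 \<Longrightarrow> R \<pi> (T - t) t x \<le> ennreal (exp (\<eta> * V_closed t x))"
proof -
  have \<rho>: "\<pi> t x \<in> Lpow (1 - \<eta>) U"
    using \<pi> t x by (simp add: admissible_policy_def)
  show "\<eta> > 0 \<Longrightarrow> ennreal (exp (\<eta> * V_closed t x)) \<le> R \<pi> (T - t) t x"
  proof -
    assume "\<eta> > 0"
    then have "exp_free_energy t x (\<pi> t x) \<le> R \<pi> (T - t) t x"
      using admissible_Suc[OF \<pi>]
      by (intro risk_obj_vs_exp_free_energy(1)[OF t] nn_integral_K_risk_obj(1)[OF t inv x])
    then show ?thesis
      using exp_free_energy_bounds(1)[OF t inv x \<rho> \<open>\<eta> > 0\<close>] by order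
  qed
  show "\<eta> < 0 \<Longrightarrow> R \<pi> (T - t) t x \<le> ennreal (exp (\<eta> * V_closed t x))"
  proof -
    assume "\<eta> < 0"
    then have "R \<pi> (T - t) t x \<le> exp_free_energy t x (\<pi> t x)"
      using admissible_Suc[OF \<pi>]
      by (intro risk_obj_vs_exp_free_energy(2)[OF t] nn_integral_K_risk_obj(2)[OF t inv x])
    then show ?thesis
      using exp_free_energy_bounds(2)[OF t inv x \<rho> \<open>\<eta> < 0\<close>] by order
  qed
qed

lemma risk_obj_opt_policy:
  assumes t: "t < T" and inv: "dp_invariant (Suc t)" and x: "x \<in> X"
  shows "R \<pi>\<^sub>o\<^sub>p\<^sub>t (T - t) t x = ennreal (exp (\<eta> * V_closed t x))"
proof -
  have \<rho>: "\<pi>\<^sub>o\<^sub>p\<^sub>t t x \<in> Lpow (1 - \<eta>) U"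
    using opt_policy_admissible_step[OF t inv] t x unfolding admissible_policy_def by blast
  have "R \<pi>\<^sub>o\<^sub>p\<^sub>t (T - t) t x = exp_free_energy t x (\<pi>\<^sub>o\<^sub>p\<^sub>t t x)"
    using inv unfolding dp_invariant_def
    by (intro risk_obj_vs_exp_free_energy(3)[OF t] nn_integral_K_risk_obj(3)[OF t inv x]) auto
  also have "\<dots> = ennreal (exp (\<eta> * V_closed t x))"
    using exp_free_energy_bounds(3)[OF t inv x \<rho>] by simp
  finally show ?thesis .
qed

lemma value_fn_eq_V_closed:
  assumes t: "t < T" and inv: "dp_invariant (Suc t)" and x: "x \<in> X"
  shows "V t x = ereal (V_closed t x)"
proof -
  have cost_eq: "ereal (1 / \<eta>) * ln_enn (ennreal (exp (\<eta> * V_closed t x))) = ereal (V_closed t x)"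
    using scaled_ln_enn_eq_iff[OF eta(1)] by blast
  have "V t x = (INF \<pi> \<in> {\<pi>. admissible t \<pi>}. cost_to_go \<eta> T U K c cT \<pi> t x)"
    using t by (simp add: value_fn_def)
  also have "\<dots> = ereal (V_closed t x)"
  proof (rule antisym)
    show "(INF \<pi> \<in> {\<pi>. admissible t \<pi>}. cost_to_go \<eta> T U K c cT \<pi> t x) \<le> ereal (V_closed t x)"
      using opt_policy_admissible_step[OF t inv] risk_obj_opt_policy[OF t inv x] cost_eq
      by (intro INF_lower2[of \<pi>\<^sub>o\<^sub>p\<^sub>t]) (auto simp: cost_to_go_def)
    show "ereal (V_closed t x) \<le> (INF \<pi> \<in> {\<pi>. admissible t \<pi>}. cost_to_go \<eta> T U K c cT \<pi> t x)"
    proof (rule INF_greatest)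
      fix \<pi> assume "\<pi> \<in> {\<pi>. admissible t \<pi>}"
      then have "(\<eta> > 0 \<and> ennreal (exp (\<eta> * V_closed t x)) \<le> R \<pi> (T - t) t x)
          \<or> (\<eta> < 0 \<and> R \<pi> (T - t) t x \<le> ennreal (exp (\<eta> * V_closed t x)))"
        using risk_obj_bounds[OF t inv _ x] eta(1) by (auto simp: neq_iff)
      then show "ereal (V_closed t x) \<le> cost_to_go \<eta> T U K c cT \<pi> t x"
        unfolding cost_to_go_def cost_eq[symmetric] by (rule scaled_ln_enn_mono)
    qed
  qed
  finally show ?thesis .
qed

lemma V_closed_measurable:
  assumes t: "t < T" and inv: "dp_invariant (Suc t)"
  shows "V_closed t \<in> borel_measurable (restrict_space borel X)"
proof -
  have [measurable]: "(\<lambda>p. Qr t (fst p) (snd p)) \<in> borel_measurable (restrict_space borel (X \<times> U))"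
    using Qr_measurable[OF t inv] by (simp add: split_beta')
  have [measurable]: "(\<lambda>x. \<integral>\<^sup>+u\<in>U. ennreal (exp (- ((1 - \<eta>) * Qr t x u))) \<partial>lborel)
      \<in> borel_measurable (restrict_space borel X)"
    by (rule measurable_set_nn_integral_snd[OF X_meas U_meas]) measurable
  show ?thesis
    unfolding V_closed_def[abs_def] by measurable
qed

lemma dp_invariant_step:
  assumes t: "t < T" and inv: "dp_invariant (Suc t)"
  shows "dp_invariant t"
proof -
  have Vr: "Vr t x = V_closed t x" if "x \<in> X" for x
    using value_fn_eq_V_closed[OF t inv that] by (simp add: Vr_def)
  have "Vr t \<in> borel_measurable (restrict_space borel X)"
    using V_closed_measurable[OF t inv]
    by (rule measurable_cong[THEN iffD1, rotated]) (simp add: space_restrict_space Vr)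
  then show ?thesis
    unfolding dp_invariant_def
    using opt_policy_admissible_step[OF t inv] value_fn_eq_V_closed[OF t inv]
      risk_obj_bounds[OF t inv] risk_obj_opt_policy[OF t inv]
    by (simp add: Vr)
qed

lemma dp_invariant: "t \<le> T \<Longrightarrow> dp_invariant t"
  by (induction rule: inc_induct) (auto intro: dp_invariant_terminal dp_invariant_step)

lemma risk_obj_eq_Vr:
  assumes "t \<le> T" "x \<in> X" "t < T \<Longrightarrow> cost_to_go \<eta> T U K c cT \<pi> t x = V t x"
  shows "R \<pi> (T - t) t x = ennreal (exp (\<eta> * Vr t x))"
proof (cases "t = T")
  case True
  then show ?thesis
    by (simp add: Vr_terminal)
next
  case False
  with assms have "cost_to_go \<eta> T U K c cT \<pi> t x = ereal (Vr t x)"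
    using dp_invariant[of t] by (simp add: dp_invariant_def)
  then show ?thesis
    unfolding cost_to_go_def scaled_ln_enn_eq_iff[OF eta(1)] .
qed

lemma opt_policy_admissible: "admissible 0 \<pi>\<^sub>o\<^sub>p\<^sub>t"
  using dp_invariant[of 0] by (simp add: dp_invariant_def)

lemma cost_to_go_opt_policy:
  assumes "t < T" "x \<in> X"
  shows "cost_to_go \<eta> T U K c cT \<pi>\<^sub>o\<^sub>p\<^sub>t t x = V t x"
  using dp_invariant[of t] assms scaled_ln_enn_eq_iff[OF eta(1)]
  by (simp add: dp_invariant_def cost_to_go_def)

lemma total_obj_opt_policy_le:
  assumes \<mu>0: "prob_space \<mu>0" "sets \<mu>0 = sets borel" "emeasure \<mu>0 X = 1" and \<pi>: "admissible 0 \<pi>"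
  shows "total_obj \<eta> T U K c cT \<mu>0 \<pi>\<^sub>o\<^sub>p\<^sub>t \<le> total_obj \<eta> T U K c cT \<mu>0 \<pi>"
proof -
  have AE_X: "AE x in \<mu>0. x \<in> X"
    using prob_space.AE_in_set_eq_1[OF \<mu>0(1)] \<mu>0 X_meas by (simp add: measure_def)
  have inv: "dp_invariant 0"
    by (rule dp_invariant) simp
  have "(\<eta> > 0 \<and> (\<integral>\<^sup>+x. R \<pi>\<^sub>o\<^sub>p\<^sub>t T 0 x \<partial>\<mu>0) \<le> (\<integral>\<^sup>+x. R \<pi> T 0 x \<partial>\<mu>0))
      \<or> (\<eta> < 0 \<and> (\<integral>\<^sup>+x. R \<pi> T 0 x \<partial>\<mu>0) \<le> (\<integral>\<^sup>+x. R \<pi>\<^sub>o\<^sub>p\<^sub>t T 0 x \<partial>\<mu>0))"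
  proof (cases "\<eta> > 0")
    case True
    have "AE x in \<mu>0. R \<pi>\<^sub>o\<^sub>p\<^sub>t T 0 x \<le> R \<pi> T 0 x"
      using AE_X by eventually_elim (use inv \<pi> True in \<open>auto simp: dp_invariant_def\<close>)
    then show ?thesis
      using True by (auto intro: nn_integral_mono_AE)
  next
    case False
    then have "\<eta> < 0"
      using eta(1) by simp
    have "AE x in \<mu>0. R \<pi> T 0 x \<le> R \<pi>\<^sub>o\<^sub>p\<^sub>t T 0 x"
      using AE_X by eventually_elim (use inv \<pi> \<open>\<eta> < 0\<close> in \<open>auto simp: dp_invariant_def\<close>)
    then show ?thesis
      using \<open>\<eta> < 0\<close> by (auto intro: nn_integral_mono_AE)
  qed
  then show ?thesis
    unfolding total_obj_def by (rule scaled_ln_enn_mono)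
qed

lemma opt_policy_unique:
  assumes \<pi>: "admissible 0 \<pi>" and opt: "\<And>t x. t < T \<Longrightarrow> x \<in> X \<Longrightarrow> cost_to_go \<eta> T U K c cT \<pi> t x = V t x"
    and t: "t < T" and x: "x \<in> X"
  shows "AE u in lborel. u \<in> U \<longrightarrow> \<pi> t x u = \<pi>\<^sub>o\<^sub>p\<^sub>t t x u"
proof -
  have inv: "dp_invariant (Suc t)"
    using t by (intro dp_invariant) simp
  have \<rho>: "\<pi> t x \<in> Lpow (1 - \<eta>) U"
    using \<pi> t x unfolding admissible_policy_def by blast
  have "exp_free_energy t x (\<pi> t x) = R \<pi> (T - t) t x"
    using t opt by (intro risk_obj_vs_exp_free_energy(3)[symmetric] nn_integral_K_risk_obj(3)[OF t inv x]
        risk_obj_eq_Vr) auto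
  also have "\<dots> = ennreal (exp (\<eta> * V_closed t x))"
    using risk_obj_eq_Vr[of t x \<pi>] opt value_fn_eq_V_closed[OF t inv x] t x by (simp add: Vr_def)
  finally show ?thesis
    using exp_free_energy_bounds(3)[OF t inv x \<rho>] by simp
qed

lemma value_fn_closed_form:
  assumes t: "t < T" and x: "x \<in> X"
  shows "V t x = ereal (1 / (\<eta> - 1))
      * ln_enn (\<integral>\<^sup>+u\<in>U. exp_e (- (ereal (1 - \<eta>) * Q t x u)) \<partial>lborel)"
proof -
  define C where "C = (\<integral>\<^sup>+u\<in>U. ennreal (exp (- ((1 - \<eta>) * Qr t x u))) \<partial>lborel)"
  have C_eq: "(\<integral>\<^sup>+u\<in>U. exp_e (- (ereal (1 - \<eta>) * Q t x u)) \<partial>lborel) = C"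
    unfolding C_def using Q_eq_Qr[OF t x]
    by (intro nn_integral_cong) (auto simp: indicator_def exp_e_ereal)
  have "0 < C"
    unfolding C_def using Qr_section_measurable[OF t dp_invariant x] t
    by (intro set_nn_integral_exp_pos U_meas U_pos) auto
  moreover have "C < \<top>"
    unfolding C_def by (rule partition_finite(2)[OF t x])
  moreover have "V t x = ereal (ln (enn2real C) / (\<eta> - 1))"
    using value_fn_eq_V_closed[OF t dp_invariant x] t by (simp add: V_closed_def C_def)
  ultimately show ?thesis
    unfolding C_eq by (cases C) (auto simp: ln_enn_ennreal)
qed

end

theorem theorem3:
  fixes \<eta> :: real and T :: nat
    and X :: "'a::euclidean_space set" and U :: "'b::euclidean_space set"
    and K :: "'a \<Rightarrow> 'b \<Rightarrow> 'a measure"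
    and c :: "nat \<Rightarrow> 'a \<Rightarrow> 'b \<Rightarrow> real" and cT :: "'a \<Rightarrow> real"
  assumes eta: "\<eta> \<noteq> 0" "\<eta> \<noteq> 1"
    and T_pos: "T > 0"
    and X_meas: "X \<in> sets borel"
    and U_meas: "U \<in> sets borel" and U_pos: "emeasure lborel U > 0"
    and K_kernel: "(\<lambda>(x, u). K x u) \<in> restrict_space borel (X \<times> U) \<rightarrow>\<^sub>M prob_algebra borel"
    and K_X: "\<forall>x\<in>X. \<forall>u\<in>U. emeasure (K x u) X = 1"
    and c_meas: "\<forall>t<T. (\<lambda>(x, u). c t x u) \<in> borel_measurable (restrict_space borel (X \<times> U))"
    and cT_meas: "cT \<in> borel_measurable (restrict_space borel X)"
    and c_bdd: "\<forall>t<T. \<exists>b. \<forall>x\<in>X. \<forall>u\<in>U. b \<le> c t x u"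
    and cT_bdd: "\<exists>b. \<forall>x\<in>X. b \<le> cT x"
    and Q_finite: "\<forall>t<T. \<forall>x\<in>X. \<forall>u\<in>U. \<bar>Q_fn \<eta> T X U K c cT t x u\<bar> \<noteq> \<infinity>"
    and int1: "\<forall>t<T. \<forall>x\<in>X. (\<integral>\<^sup>+u\<in>U. exp_e (- Q_fn \<eta> T X U K c cT t x u) \<partial>lborel) < \<top>"
    and int2: "\<forall>t<T. \<forall>x\<in>X.
                 (\<integral>\<^sup>+u\<in>U. exp_e (- (ereal (1 - \<eta>) * Q_fn \<eta> T X U K c cT t x u)) \<partial>lborel) < \<top>"
  shows
    \<comment> \<open>pi* is an admissible policy\<close>
    "admissible_policy \<eta> T X U 0 (opt_policy \<eta> T X U K c cT)
     \<comment> \<open>pi* attains the value function V_t(x) for every t and x\<close>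
     \<and> (\<forall>t<T. \<forall>x\<in>X. cost_to_go \<eta> T U K c cT (opt_policy \<eta> T X U K c cT) t x
                        = value_fn \<eta> T X U K c cT t x)
     \<comment> \<open>pi* is optimal for problem (**), for every initial distribution on X\<close>
     \<and> (\<forall>\<mu>0 \<pi>. prob_space \<mu>0 \<and> sets \<mu>0 = sets borel \<and> emeasure \<mu>0 X = 1
                \<and> admissible_policy \<eta> T X U 0 \<pi>
              \<longrightarrow> total_obj \<eta> T U K c cT \<mu>0 (opt_policy \<eta> T X U K c cT)
                    \<le> total_obj \<eta> T U K c cT \<mu>0 \<pi>)
     \<comment> \<open>uniqueness: any optimal policy coincides with pi* (a.e. in u, as densities)\<close>
     \<and> (\<forall>\<pi>. admissible_policy \<eta> T X U 0 \<pi>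
             \<and> (\<forall>t<T. \<forall>x\<in>X. cost_to_go \<eta> T U K c cT \<pi> t x = value_fn \<eta> T X U K c cT t x)
           \<longrightarrow> (\<forall>t<T. \<forall>x\<in>X. AE u in lborel. u \<in> U \<longrightarrow> \<pi> t x u = opt_policy \<eta> T X U K c cT t x u))
     \<comment> \<open>closed form of the value function\<close>
     \<and> (\<forall>t<T. \<forall>x\<in>X. value_fn \<eta> T X U K c cT t x
           = ereal (1 / (\<eta> - 1)) *
             ln_enn (\<integral>\<^sup>+u\<in>U. exp_e (- (ereal (1 - \<eta>) * Q_fn \<eta> T X U K c cT t x u)) \<partial>lborel))"
proof -
  interpret risk_sensitive_mdp \<eta> T X U K c cT
    using eta X_meas U_meas U_pos K_kernel K_X c_meas cT_meas Q_finite int1 int2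
    by unfold_locales
  show ?thesis
    using opt_policy_admissible cost_to_go_opt_policy total_obj_opt_policy_le opt_policy_unique
      value_fn_closed_form
    by blast
qed

end
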